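(* Let $(\mathcal G,\mathcal F)$ be a $B_n$-generalized almost pseudo-Hermitian structure on an odd exact Courant algebroid $E$ over a manifold $M$ of dimension $n$, let $U:=\ker\mathcal F$ and let $u_0\in\Gamma(U)$ satisfy $\langle u_0,u_0\rangle=(-1)^n$. Then: (i) $\mathcal G^{\mathrm{end}}(u_0)=(-1)^nu_0$; i.e. $u_0$ is a section of $E_+$ if $n$ is even and of $E_-$ if $n$ is odd; (ii) for all $u,v\in E$, $\mathcal G(\mathcal Fu,\mathcal Fv)=\mathcal G(u,v)-\langle u,u_0\rangle\langle v,u_0\rangle$ and $\mathcal G(\mathcal Fu,v)=-\mathcal G(u,\mathcal Fv)$, where $\mathcal G(u,v):=\langle\mathcal G^{\mathrm{end}}u,v\rangle$.
   Context: An odd exact Courant algebroid over an $n$-manifold $M$ is a Courant algebroid (vector bundle $E$ with nondegenerate symmetric scalar product $\langle\cdot,\cdot\rangle$, Dorfman bracket and anchor $\pi:E\to TM$) isomorphic to $TM\oplus T^*M\oplus\mathbb R$ with scalar product $\langle X+\xi+\lambda,Y+\eta+\mu\rangle=\tfrac12(\eta(X)+\xi(Y))+\lambda\mu$, anchor the projection and Dorfman bracket $[X+\xi+\lambda,Y+\eta+\mu]=\mathcal L_XY+\mathcal L_X\eta-i_Yd\xi+2\mu\,d\lambda+i_Xi_YH-2(\mu\,i_XF-\lambda\,i_YF)+X(\mu)-Y(\lambda)+F(X,Y)$ for some closed $2$-form $F$ and $3$-form $H$ with $dH=-F\wedge F$. A generalized metric is a rank $n$ subbundle $E_-\subset E$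 on which $\langle\cdot,\cdot\rangle$ is nondegenerate and with $\pi|_{E_-}$ an isomorphism onto $TM$; $E_+:=E_-^\perp$, $\mathcal G^{\mathrm{end}}=\pm\mathrm{Id}$ on $E_\pm$. A $B_n$-generalized almost complex structure is an endomorphism $\mathcal F$ whose $i$-eigenbundle $L\subset E\otimes\mathbb C$ is isotropic of rank $n$ with $L\cap\bar L=0$, whose $-i$-eigenbundle is $\bar L$ and which vanishes on the rank-one bundle $(L\oplus\bar L)^\perp$. A $B_n$-generalized almost pseudo-Hermitian structure is such a pair $(\mathcal G,\mathcal F)$ with $\mathcal G^{\mathrm{end}}\mathcal F=\mathcal F\mathcal G^{\mathrm{end}}$. *)

theory Defs
  imports "HOL-Analysis.Analysis"
begin

text \<open>Fibre of the odd exact Courant algebroid TM + T*M + R at a point of an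
n-manifold, n = CARD('n).  T_xM is identified with real^'n and T*_xM with
real^'n via the dual basis, so that the pairing eta(X) is the dot product.\<close>

type_synonym 'n fib = "(real^'n) \<times> (real^'n) \<times> real"

definition sp :: "('n::finite) fib \<Rightarrow> 'n fib \<Rightarrow> real" where
  "sp x y = (case x of (X, xi, l) \<Rightarrow> case y of (Y, eta, m) \<Rightarrow>
              (eta \<bullet> X + xi \<bullet> Y) / 2 + l * m)"

definition anchor :: "('n::finite) fib \<Rightarrow> real^'n" where
  "anchor x = fst x"

text \<open>Complexification E (x) C, modelled as pairs (a,b) meaning a + i b.\<close>

type_synonym 'n cfib = "('n::finite) fib \<times> 'n fib"

definition cmult_i :: "('n::finite) cfib \<Rightarrow> 'n cfib" where
  "cmult_i w = (- snd w, fst w)"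

definition cconj :: "('n::finite) cfib \<Rightarrow> 'n cfib" where
  "cconj w = (fst w, - snd w)"

definition csp :: "('n::finite) cfib \<Rightarrow> 'n cfib \<Rightarrow> complex" where
  "csp w z = Complex (sp (fst w) (fst z) - sp (snd w) (snd z))
                     (sp (fst w) (snd z) + sp (snd w) (fst z))"

definition cext :: "(('n::finite) fib \<Rightarrow> 'n fib) \<Rightarrow> 'n cfib \<Rightarrow> 'n cfib" where
  "cext F w = (F (fst w), F (snd w))"

definition complex_subspace :: "('n::finite) cfib set \<Rightarrow> bool" where
  "complex_subspace L \<longleftrightarrow> subspace L \<and> (\<forall>w\<in>L. cmult_i w \<in> L)"

definition complex_rank :: "('n::finite) cfib set \<Rightarrow> nat \<Rightarrow> bool" where
  "complex_rank L k \<longleftrightarrow> complex_subspace L \<and> dim L = 2 * k"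

definition isotropic :: "('n::finite) cfib set \<Rightarrow> bool" where
  "isotropic L \<longleftrightarrow> (\<forall>w\<in>L. \<forall>z\<in>L. csp w z = 0)"

definition i_eigenspace :: "(('n::finite) fib \<Rightarrow> 'n fib) \<Rightarrow> 'n cfib set" where
  "i_eigenspace F = {w. cext F w = cmult_i w}"

definition minus_i_eigenspace :: "(('n::finite) fib \<Rightarrow> 'n fib) \<Rightarrow> 'n cfib set" where
  "minus_i_eigenspace F = {w. cext F w = - cmult_i w}"

definition Bn_gen_almost_complex :: "(('n::finite) fib \<Rightarrow> 'n fib) \<Rightarrow> bool" where
  "Bn_gen_almost_complex F \<longleftrightarrow> linear F \<and>
     (let L = i_eigenspace F; Lbar = cconj ` L in
        isotropic L \<and> complex_rank L CARD('n) \<and> L \<inter> Lbar = {0} \<and>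
        minus_i_eigenspace F = Lbar \<and>
        (\<forall>w. (\<forall>z\<in>{a + b | a b. a \<in> L \<and> b \<in> Lbar}. csp w z = 0)
              \<longrightarrow> cext F w = 0))"

definition gen_metric :: "('n::finite) fib set \<Rightarrow> bool" where
  "gen_metric Em \<longleftrightarrow> subspace Em \<and> dim Em = CARD('n) \<and>
     (\<forall>x\<in>Em. (\<forall>y\<in>Em. sp x y = 0) \<longrightarrow> x = 0) \<and>
     bij_betw anchor Em UNIV"

definition Eplus :: "('n::finite) fib set \<Rightarrow> 'n fib set" where
  "Eplus Em = {x. \<forall>y\<in>Em. sp x y = 0}"

text \<open>G^end: +Id on E_+ and -Id on E_-\<close>
definition is_Gend :: "('n::finite) fib set \<Rightarrow> ('n fib \<Rightarrow> 'n fib) \<Rightarrow> bool" where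
  "is_Gend Em G \<longleftrightarrow> linear G \<and> (\<forall>x\<in>Eplus Em. G x = x) \<and> (\<forall>x\<in>Em. G x = - x)"

definition Bn_gen_almost_pseudo_hermitian ::
  "('n::finite) fib set \<Rightarrow> ('n fib \<Rightarrow> 'n fib) \<Rightarrow> ('n fib \<Rightarrow> 'n fib) \<Rightarrow> bool" where
  "Bn_gen_almost_pseudo_hermitian Em G F \<longleftrightarrow>
     gen_metric Em \<and> is_Gend Em G \<and> Bn_gen_almost_complex F \<and> G \<circ> F = F \<circ> G"

definition Gform :: "(('n::finite) fib \<Rightarrow> 'n fib) \<Rightarrow> 'n fib \<Rightarrow> 'n fib \<Rightarrow> real" where
  "Gform G u v = sp (G u) v"

end

theory Submission
  imports Defs
begin

text \<open>Let \<open>V = {a. F (F a) = - a}\<close>, the real part of \<open>L \<oplus> cconj ` L\<close>: it has dimension \<open>2n\<close>, \<open>F\<close> is a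
complex structure on it, and isotropy of \<open>L\<close> makes \<open>F\<close> isometric and skew on \<open>V\<close>. The kernel
vector \<open>u\<^sub>0\<close> spans a complement of \<open>V\<close>, and \<open>V \<bottom> u\<^sub>0\<close> because the orthogonal of \<open>V\<close> lies in
\<open>ker F\<close>; splitting \<open>u, v\<close> along \<open>V \<oplus> \<real>u\<^sub>0\<close> then gives (ii). Since \<open>G\<close> commutes with \<open>F\<close>, \<open>u\<^sub>0\<close> is an
eigenvector of \<open>G\<close>, so it lies in \<open>E\<^sub>+\<close> or in \<open>E\<^sub>-\<close>. Both are \<open>F\<close>-invariant, and an \<open>F\<close>-invariant
subspace containing \<open>u\<^sub>0\<close> is \<open>\<real>u\<^sub>0\<close> plus a complex subspace of \<open>V\<close>, hence odd-dimensional. As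
\<open>dim E\<^sub>+ = n + 1\<close> and \<open>dim E\<^sub>- = n\<close>, the parity of \<open>n\<close> decides which one contains \<open>u\<^sub>0\<close>.\<close>

definition sp_dual :: "('n::finite) fib \<Rightarrow> 'n fib" where
  "sp_dual y = ((1/2) *\<^sub>R fst (snd y), (1/2) *\<^sub>R fst y, snd (snd y))"

lemma sp_eq_inner_sp_dual: "sp x y = x \<bullet> sp_dual y"
  by (cases x; cases y) (auto simp: sp_def sp_dual_def inner_commute algebra_simps)

lemma sp_commute: "sp x y = sp y x"
  by (cases x; cases y) (auto simp: sp_def inner_commute algebra_simps)

lemma linear_sp_dual: "linear sp_dual"
  by (rule linearI) (auto simp: sp_dual_def algebra_simps)

lemma inj_sp_dual: "inj sp_dual"
  by (rule injI) (auto simp: sp_dual_def prod_eq_iff)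

lemma sp_left_simps:
  "sp (x + y) z = sp x z + sp y z" "sp (x - y) z = sp x z - sp y z"
  "sp (c *\<^sub>R x) z = c * sp x z" "sp (- x) z = - sp x z" "sp 0 z = 0"
  by (simp_all add: sp_eq_inner_sp_dual inner_add_left inner_diff_left)

lemma sp_right_simps:
  "sp z (x + y) = sp z x + sp z y" "sp z (x - y) = sp z x - sp z y"
  "sp z (c *\<^sub>R x) = c * sp z x" "sp z (- x) = - sp z x" "sp z 0 = 0"
  by (simp_all add: sp_commute[of z] sp_left_simps)

lemmas sp_simps = sp_left_simps sp_right_simps

lemma sp_nondegenerate:
  assumes "\<And>x. sp x y = 0" shows "y = 0"
proof -
  have "sp_dual y \<bullet> sp_dual y = 0" using assms by (simp add: sp_eq_inner_sp_dual)
  then have "sp_dual y = sp_dual 0" using linear_sp_dual linear_0 by fastforce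
  then show ?thesis by (metis inj_sp_dual injD)
qed

lemma span_image_subset:
  assumes "linear f" "f ` B \<subseteq> span B" shows "f ` span B \<subseteq> span B"
  by (metis assms span_linear_image span_minimal subspace_span)

lemma complex_structure_not_in_span_insert:
  assumes lin: "linear F" and T: "subspace T" "F ` T \<subseteq> T"
    and x: "F (F x) = - x" "x \<notin> T"
  shows "F x \<notin> span (insert x T)"
proof
  assume "F x \<in> span (insert x T)"
  then obtain k where k: "F x - k *\<^sub>R x \<in> T" using T by (auto simp: span_insert span_eq_iff[THEN iffD2])
  then have "F (F x - k *\<^sub>R x) \<in> T" using T by blast
  then have "- x - k *\<^sub>R F x \<in> T" using x lin by (simp add: linear_diff linear_scale)
  then have "(- x - k *\<^sub>R F x) + k *\<^sub>R (F x - k *\<^sub>R x) \<in> T"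
    using k T subspace_add subspace_scale by blast
  moreover have "(- x - k *\<^sub>R F x) + k *\<^sub>R (F x - k *\<^sub>R x) = - ((1 + k\<^sup>2) *\<^sub>R x)"
    by (simp add: algebra_simps power2_eq_square)
  ultimately have "(1 + k\<^sup>2) *\<^sub>R x \<in> T" using T subspace_neg by fastforce
  moreover have "1 + k\<^sup>2 \<noteq> 0" by (metis add_pos_nonneg zero_le_power2 zero_less_one less_irrefl)
  ultimately have "x \<in> T"
    by (metis T(1) subspace_scale scaleR_scaleR left_inverse scaleR_one)
  then show False using x by simp
qed

lemma complex_structure_invariant_extension:
  fixes F :: "'a::euclidean_space \<Rightarrow> 'a"
  assumes lin: "linear F" and S: "subspace S" "\<And>x. x \<in> S \<Longrightarrow> F x \<in> S"
    and FF: "\<And>x. x \<in> S \<Longrightarrow> F (F x) = - x"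
    and T: "subspace T" "T \<subseteq> S" "F ` T \<subseteq> T" and x: "x \<in> S" "x \<notin> T"
  obtains T' where "subspace T'" "T' \<subseteq> S" "F ` T' \<subseteq> T'" "dim T' = dim T + 2"
proof
  let ?B = "insert (F x) (insert x T)"
  show "subspace (span ?B)" by simp
  show "span ?B \<subseteq> S" using S T x by (intro span_minimal) auto
  have "F ` ?B \<subseteq> span ?B"
    using FF x T(3) by (auto intro: span_base span_neg)
  then show "F ` span ?B \<subseteq> span ?B" by (rule span_image_subset[OF lin])
  have "x \<notin> span T" using T(1) x(2) by (simp add: span_eq_iff[THEN iffD2])
  moreover have "F x \<notin> span (insert x T)"
    using complex_structure_not_in_span_insert[OF lin T(1,3) FF[OF x(1)] x(2)] .
  ultimately show "dim (span ?B) = dim T + 2"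
    unfolding dim_span dim_insert[of "F x"] dim_insert[of x] by simp
qed

lemma even_dim_complex_structure:
  fixes F :: "'a::euclidean_space \<Rightarrow> 'a"
  assumes lin: "linear F" and S: "subspace S" "\<And>x. x \<in> S \<Longrightarrow> F x \<in> S"
    and FF: "\<And>x. x \<in> S \<Longrightarrow> F (F x) = - x"
  shows "even (dim S)"
proof -
  have "even (dim S - dim T)" if "subspace T" "T \<subseteq> S" "F ` T \<subseteq> T" for T
    using that
  proof (induction "dim S - dim T" arbitrary: T rule: less_induct)
    case less
    show ?case
    proof (cases "S \<subseteq> T")
      case True
      then have "T = S" using less.prems by blast
      then show ?thesis by simp
    next
      case False
      then obtain x where x: "x \<in> S" "x \<notin> T" by auto
      obtain T' where T': "subspace T'" "T' \<subseteq> S" "F ` T' \<subseteq> T'" "dim T' = dim T + 2"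
        by (rule complex_structure_invariant_extension[OF lin S FF less.prems x])
      have "dim T' \<le> dim S" using T'(2) dim_subset by blast
      then have "even (dim S - dim T')" using less.hyps[OF _ T'(1-3)] T'(4) by simp
      then show ?thesis using T'(4) \<open>dim T' \<le> dim S\<close> by presburger
    qed
  qed
  from this[of "{0}"] show ?thesis using lin S(1) by (simp add: linear_0 subspace_0)
qed

lemma subspace_Eplus: "subspace (Eplus Em)"
  unfolding Eplus_def subspace_def by (auto simp: sp_simps)

lemma dim_Eplus_add_dim:
  fixes Em :: "('n::finite) fib set"
  assumes "subspace Em" shows "dim (Eplus Em) + dim Em = 2 * CARD('n) + 1"
proof -
  have "Eplus Em = {y \<in> UNIV. \<forall>x \<in> sp_dual ` Em. orthogonal x y}"
    unfolding Eplus_def orthogonal_def sp_eq_inner_sp_dual by (auto simp: inner_commute)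
  moreover have "dim (sp_dual ` Em) = dim Em"
    using dim_image_eq[OF linear_sp_dual] inj_sp_dual by (metis inj_on_subset subset_UNIV)
  moreover have "subspace (sp_dual ` Em)"
    using linear_subspace_image[OF linear_sp_dual assms] .
  ultimately show ?thesis
    using dim_subspace_orthogonal_to_vectors[of "sp_dual ` Em" UNIV] by simp
qed

context
  fixes Em :: "('n::finite) fib set"
  assumes gm: "gen_metric Em"
begin

lemma subspace_gen_metric: "subspace Em"
  using gm unfolding gen_metric_def by simp

lemma Eplus_Int_eq_zero: "Eplus Em \<inter> Em = {0}"
proof -
  have "x = 0" if "x \<in> Eplus Em" "x \<in> Em" for x
    using gm that unfolding gen_metric_def Eplus_def by (simp add: sp_commute)
  moreover have "0 \<in> Eplus Em \<inter> Em"
    using subspace_0[OF subspace_Eplus] subspace_0[OF subspace_gen_metric] by blast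
  ultimately show ?thesis by blast
qed

lemma Eplus_Em_decomposition: "\<exists>p m. p \<in> Eplus Em \<and> m \<in> Em \<and> x = p + m"
proof -
  let ?S = "{p + m |p m. p \<in> Eplus Em \<and> m \<in> Em}"
  have "dim ?S + dim (Eplus Em \<inter> Em) = dim (Eplus Em) + dim Em"
    by (rule dim_sums_Int[OF subspace_Eplus subspace_gen_metric])
  then have "dim ?S = DIM('n fib)"
    using Eplus_Int_eq_zero dim_Eplus_add_dim[OF subspace_gen_metric] by simp
  then have "span ?S = UNIV" by (simp only: dim_eq_full)
  moreover have "span ?S = ?S"
    by (rule span_eq_iff[THEN iffD2, OF subspace_sums[OF subspace_Eplus subspace_gen_metric]])
  ultimately show ?thesis by blast
qed

lemma dim_Eplus: "dim (Eplus Em) = CARD('n) + 1"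
  using gm dim_Eplus_add_dim[of Em] unfolding gen_metric_def by simp

context
  fixes G :: "'n fib \<Rightarrow> 'n fib"
  assumes Gend: "is_Gend Em G"
begin

lemma Gend_add: "p \<in> Eplus Em \<Longrightarrow> m \<in> Em \<Longrightarrow> G (p + m) = p - m"
  using Gend unfolding is_Gend_def by (simp add: linear_add)

lemma Gend_involutive: "G (G x) = x"
proof -
  obtain p m where pm: "p \<in> Eplus Em" "m \<in> Em" "x = p + m"
    using Eplus_Em_decomposition by blast
  then have "G (G x) = G p - G m"
    using Gend Gend_add unfolding is_Gend_def by (simp add: linear_diff)
  then show ?thesis using pm Gend unfolding is_Gend_def by simp
qed

lemma Gend_self_adjoint: "sp (G x) y = sp x (G y)"
proof -
  obtain p m where x: "p \<in> Eplus Em" "m \<in> Em" "x = p + m"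
    using Eplus_Em_decomposition by blast
  obtain p' m' where y: "p' \<in> Eplus Em" "m' \<in> Em" "y = p' + m'"
    using Eplus_Em_decomposition by blast
  have "sp p m' = 0" "sp m p' = 0"
    using x y unfolding Eplus_def by (auto simp: sp_commute)
  then show ?thesis using Gend_add x y by (simp add: sp_simps)
qed

lemma Gend_eq_self_iff: "G y = y \<longleftrightarrow> y \<in> Eplus Em"
proof
  assume Gy: "G y = y"
  obtain p m where pm: "p \<in> Eplus Em" "m \<in> Em" "y = p + m"
    using Eplus_Em_decomposition by blast
  then have "p - m = p + m" using Gy Gend_add by simp
  then have "(2::real) *\<^sub>R m = 0" by (simp add: scaleR_2 algebra_simps)
  then have "m = 0" by simp
  then show "y \<in> Eplus Em" using pm by simp
qed (use Gend in \<open>simp add: is_Gend_def\<close>)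

lemma Gend_eq_neg_iff: "G y = - y \<longleftrightarrow> y \<in> Em"
proof
  assume Gy: "G y = - y"
  obtain p m where pm: "p \<in> Eplus Em" "m \<in> Em" "y = p + m"
    using Eplus_Em_decomposition by blast
  then have "p - m = - (p + m)" using Gy Gend_add by simp
  then have "(2::real) *\<^sub>R p = 0" by (simp add: scaleR_2 algebra_simps)
  then have "p = 0" by simp
  then show "y \<in> Em" using pm by simp
qed (use Gend in \<open>simp add: is_Gend_def\<close>)

end

end

text \<open>The real points of \<open>L \<oplus> cconj ` L\<close>, where \<open>L\<close> is the \<open>i\<close>-eigenbundle of \<open>F\<close>.\<close>

definition complex_part :: "(('n::finite) fib \<Rightarrow> 'n fib) \<Rightarrow> 'n fib set" where
  "complex_part F = {a. F (F a) = - a}"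

lemma Bn_gen_almost_complexD:
  fixes F :: "('n::finite) fib \<Rightarrow> 'n fib"
  assumes "Bn_gen_almost_complex F"
  shows "linear F" and "isotropic (i_eigenspace F)"
    and "complex_rank (i_eigenspace F) CARD('n)"
    and "\<forall>w. (\<forall>z\<in>{a + b |a b. a \<in> i_eigenspace F \<and> b \<in> cconj ` i_eigenspace F}. csp w z = 0)
           \<longrightarrow> cext F w = 0"
  using assms unfolding Bn_gen_almost_complex_def Let_def by (simp_all only:) (elim conjE)

lemma subspace_complex_part: "linear F \<Longrightarrow> subspace (complex_part F)"
  unfolding complex_part_def subspace_def by (auto simp: linear_0 linear_add linear_scale)

lemma complex_part_closed: "linear F \<Longrightarrow> a \<in> complex_part F \<Longrightarrow> F a \<in> complex_part F"
  unfolding complex_part_def by (simp add: linear_neg)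

lemma i_eigenspace_iff: "(a, b) \<in> i_eigenspace F \<longleftrightarrow> F a = - b \<and> F b = a"
  unfolding i_eigenspace_def cext_def cmult_i_def by auto

lemma i_eigenspace_complex_part:
  "linear F \<Longrightarrow> a \<in> complex_part F \<Longrightarrow> (a, - F a) \<in> i_eigenspace F"
  unfolding i_eigenspace_iff complex_part_def by (simp add: linear_neg)

lemma fst_i_eigenspace:
  assumes "linear F" shows "fst ` i_eigenspace F = complex_part F"
proof
  show "fst ` i_eigenspace F \<subseteq> complex_part F"
  proof
    fix a assume "a \<in> fst ` i_eigenspace F"
    then obtain w where "w \<in> i_eigenspace F" "a = fst w" by blast
    then have "F a = - snd w" "F (snd w) = a" using i_eigenspace_iff[of "fst w" "snd w"] by simp_all
    then show "a \<in> complex_part F" using assms by (simp add: complex_part_def linear_neg)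
  qed
  show "complex_part F \<subseteq> fst ` i_eigenspace F"
    using i_eigenspace_complex_part[OF assms] by (metis fst_conv image_eqI subsetI)
qed

lemma dim_complex_part:
  fixes F :: "('n::finite) fib \<Rightarrow> 'n fib"
  assumes "Bn_gen_almost_complex F" shows "dim (complex_part F) = 2 * CARD('n)"
proof -
  have L: "subspace (i_eigenspace F)" "dim (i_eigenspace F) = 2 * CARD('n)"
    using Bn_gen_almost_complexD(3)[OF assms]
    unfolding complex_rank_def complex_subspace_def by simp_all
  have "inj_on fst (span (i_eigenspace F))"
    using L(1) by (auto intro!: inj_onI simp: span_eq_iff[THEN iffD2] i_eigenspace_iff)
  then show ?thesis
    using dim_image_eq[OF linear_fst] fst_i_eigenspace Bn_gen_almost_complexD(1)[OF assms] L(2)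
    by metis
qed

lemma sp_F_complex_part:
  assumes F: "Bn_gen_almost_complex F" and a: "a \<in> complex_part F" and c: "c \<in> complex_part F"
  shows "sp (F a) (F c) = sp a c" and "sp (F a) c = - sp a (F c)"
proof -
  have "(a, - F a) \<in> i_eigenspace F" "(c, - F c) \<in> i_eigenspace F"
    using a c i_eigenspace_complex_part Bn_gen_almost_complexD(1)[OF F] by blast+
  then have "csp (a, - F a) (c, - F c) = 0"
    using Bn_gen_almost_complexD(2)[OF F] unfolding isotropic_def by blast
  then have "sp a c - sp (F a) (F c) = 0" "- sp a (F c) - sp (F a) c = 0"
    unfolding csp_def by (simp_all add: complex_eq_iff sp_simps)
  then show "sp (F a) (F c) = sp a c" and "sp (F a) c = - sp a (F c)" by simp_all
qed

lemma i_eigenspace_components: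
  assumes "linear F" "w \<in> i_eigenspace F"
  shows "fst w \<in> complex_part F" and "snd w \<in> complex_part F"
proof -
  show a: "fst w \<in> complex_part F" using fst_i_eigenspace assms by blast
  have "snd w = - F (fst w)" using assms(2) i_eigenspace_iff[of "fst w" "snd w"] by simp
  then show "snd w \<in> complex_part F"
    using a assms(1) complex_part_closed subspace_complex_part subspace_neg by metis
qed

lemma complex_part_orthogonal_imp_kernel:
  fixes F :: "('n::finite) fib \<Rightarrow> 'n fib"
  assumes F: "Bn_gen_almost_complex F" and x: "\<forall>p\<in>complex_part F. sp x p = 0"
  shows "F x = 0"
proof -
  note lin = Bn_gen_almost_complexD(1)[OF F]
  have "csp (x, 0) z = 0"
    if "z \<in> {a + b |a b. a \<in> i_eigenspace F \<and> b \<in> cconj ` i_eigenspace F}" for z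
  proof -
    from that obtain a b where ab: "a \<in> i_eigenspace F" "b \<in> i_eigenspace F" "z = a + cconj b"
      by blast
    have "fst z = fst a + fst b" "snd z = snd a - snd b" using ab(3) by (simp_all add: cconj_def)
    then have "fst z \<in> complex_part F" "snd z \<in> complex_part F"
      using i_eigenspace_components[OF lin ab(1)] i_eigenspace_components[OF lin ab(2)]
        subspace_complex_part[OF lin] by (simp_all add: subspace_add subspace_diff)
    then show ?thesis using x by (simp add: csp_def sp_simps complex_eq_iff)
  qed
  then have "cext F (x, 0) = 0" using Bn_gen_almost_complexD(4)[OF F] by blast
  then show ?thesis by (simp add: cext_def zero_prod_def)
qed

context
  fixes F :: "('n::finite) fib \<Rightarrow> 'n fib" and u0 :: "'n fib"
  assumes F: "Bn_gen_almost_complex F" and Fu0: "F u0 = 0" and u0: "u0 \<noteq> 0"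
begin

lemma kernel_vector_notin_complex_part: "u0 \<notin> complex_part F"
  using Fu0 u0 Bn_gen_almost_complexD(1)[OF F] by (simp add: complex_part_def linear_0)

lemma complex_part_complement: "\<exists>k. x - k *\<^sub>R u0 \<in> complex_part F"
proof -
  note V = subspace_complex_part[OF Bn_gen_almost_complexD(1)[OF F]]
  have "u0 \<notin> span (complex_part F)"
    using kernel_vector_notin_complex_part V by (simp add: span_eq_iff[THEN iffD2])
  then have "dim (insert u0 (complex_part F)) = DIM('n fib)"
    using dim_complex_part[OF F] by (simp add: dim_insert)
  then have "x \<in> span (insert u0 (complex_part F))" using dim_eq_full by blast
  then show ?thesis using V by (simp add: span_insert span_eq_iff[THEN iffD2])
qed

lemma kernel_eq_multiple: "F x = 0 \<Longrightarrow> \<exists>k. x = k *\<^sub>R u0"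
proof -
  assume Fx: "F x = 0"
  note lin = Bn_gen_almost_complexD(1)[OF F]
  obtain k where k: "x - k *\<^sub>R u0 \<in> complex_part F" using complex_part_complement by blast
  have "F (x - k *\<^sub>R u0) = 0" using Fx Fu0 lin by (simp add: linear_diff linear_scale)
  then have "x - k *\<^sub>R u0 = 0" using k lin by (simp add: complex_part_def linear_0)
  then show ?thesis by auto
qed

lemma sp_complex_part_kernel_vector: "v \<in> complex_part F \<Longrightarrow> sp v u0 = 0"
proof -
  \<comment> \<open>a nonzero vector orthogonal to \<open>complex_part F\<close> lies in \<open>ker F\<close>, so it is a multiple of \<open>u0\<close>\<close>
  assume v: "v \<in> complex_part F"
  have "dim (sp_dual ` complex_part F) < DIM('n fib)"
    using dim_image_le[OF linear_sp_dual, of "complex_part F"] dim_complex_part[OF F] by simp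
  then obtain x where x: "x \<noteq> 0" "\<And>y. y \<in> span (sp_dual ` complex_part F) \<Longrightarrow> orthogonal x y"
    using orthogonal_to_subspace_exists by blast
  then have "\<forall>p\<in>complex_part F. sp x p = 0"
    unfolding sp_eq_inner_sp_dual orthogonal_def by (blast intro: span_base)
  then obtain k where "x = k *\<^sub>R u0"
    using complex_part_orthogonal_imp_kernel[OF F] kernel_eq_multiple by blast
  with x(1) \<open>\<forall>p\<in>complex_part F. sp x p = 0\<close> v show "sp v u0 = 0"
    by (auto simp: sp_simps sp_commute)
qed

lemma sp_kernel_vector_nonzero: "sp u0 u0 \<noteq> 0"
proof
  assume "sp u0 u0 = 0"
  have "sp x u0 = 0" for x
  proof -
    obtain k where "x - k *\<^sub>R u0 \<in> complex_part F" using complex_part_complement by blast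
    then have "sp (x - k *\<^sub>R u0) u0 = 0" by (rule sp_complex_part_kernel_vector)
    then show ?thesis using \<open>sp u0 u0 = 0\<close> by (simp add: sp_simps)
  qed
  then show False using sp_nondegenerate u0 by blast
qed

lemma complex_part_projection: "x - (sp x u0 / sp u0 u0) *\<^sub>R u0 \<in> complex_part F"
proof -
  obtain k where k: "x - k *\<^sub>R u0 \<in> complex_part F" using complex_part_complement by blast
  then have "sp (x - k *\<^sub>R u0) u0 = 0" by (rule sp_complex_part_kernel_vector)
  then have "k = sp x u0 / sp u0 u0" using sp_kernel_vector_nonzero by (simp add: sp_simps field_simps)
  then show ?thesis using k by simp
qed

lemma F_complex_part_projection: "F (x - (sp x u0 / sp u0 u0) *\<^sub>R u0) = F x"
  using Fu0 Bn_gen_almost_complexD(1)[OF F] by (simp add: linear_diff linear_scale)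

lemma sp_F_skew: "sp (F x) y = - sp x (F y)"
proof -
  let ?a = "x - (sp x u0 / sp u0 u0) *\<^sub>R u0" and ?c = "y - (sp y u0 / sp u0 u0) *\<^sub>R u0"
  have a: "?a \<in> complex_part F" and c: "?c \<in> complex_part F"
    by (rule complex_part_projection)+
  have "sp (F x) y = sp (F ?a) ?c"
    using sp_complex_part_kernel_vector[OF complex_part_closed[OF Bn_gen_almost_complexD(1)[OF F] a]]
    by (simp add: F_complex_part_projection sp_simps)
  also have "\<dots> = - sp ?a (F ?c)" by (rule sp_F_complex_part(2)[OF F a c])
  also have "\<dots> = - sp x (F y)"
    using sp_complex_part_kernel_vector[OF complex_part_closed[OF Bn_gen_almost_complexD(1)[OF F] c]]
    unfolding F_complex_part_projection by (simp add: sp_simps sp_commute)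
  finally show ?thesis .
qed

lemma sp_F_F: "sp (F x) (F y) = sp x y - sp x u0 * sp y u0 / sp u0 u0"
proof -
  let ?a = "x - (sp x u0 / sp u0 u0) *\<^sub>R u0" and ?c = "y - (sp y u0 / sp u0 u0) *\<^sub>R u0"
  have a: "?a \<in> complex_part F" and c: "?c \<in> complex_part F"
    by (rule complex_part_projection)+
  have "sp (F x) (F y) = sp ?a ?c"
    using sp_F_complex_part(1)[OF F a c] by (simp add: F_complex_part_projection)
  also have "\<dots> = sp ?a y" using sp_complex_part_kernel_vector[OF a] by (simp add: sp_simps)
  also have "\<dots> = sp x y - sp x u0 * sp y u0 / sp u0 u0" by (simp add: sp_simps sp_commute)
  finally show ?thesis .
qed

lemma odd_dim_invariant_subspace:
  assumes S: "subspace S" "u0 \<in> S" "\<And>x. x \<in> S \<Longrightarrow> F x \<in> S"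
  shows "odd (dim S)"
proof -
  note lin = Bn_gen_almost_complexD(1)[OF F]
  let ?W = "S \<inter> complex_part F"
  have W: "subspace ?W" using S(1) subspace_complex_part[OF lin] by (rule subspace_inter)
  have "even (dim ?W)"
  proof (rule even_dim_complex_structure[OF lin W])
    show "F x \<in> ?W" if "x \<in> ?W" for x using that S(3) complex_part_closed[OF lin] by blast
    show "F (F x) = - x" if "x \<in> ?W" for x using that by (simp add: complex_part_def)
  qed
  have "u0 \<notin> span ?W"
    using kernel_vector_notin_complex_part W by (simp add: span_eq_iff[THEN iffD2])
  then have "dim (insert u0 ?W) = dim ?W + 1" by (simp add: dim_insert)
  moreover have "span (insert u0 ?W) = S"
  proof (rule span_subspace)
    show "insert u0 ?W \<subseteq> S" using S(2) by blast
    show "S \<subseteq> span (insert u0 ?W)"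
    proof
      fix y assume "y \<in> S"
      then have "y - (sp y u0 / sp u0 u0) *\<^sub>R u0 \<in> ?W"
        using complex_part_projection subspace_diff[OF S(1)] subspace_scale[OF S(1) S(2)] by blast
      then show "y \<in> span (insert u0 ?W)" unfolding span_insert by (blast intro: span_base)
    qed
  qed (fact S(1))
  then have "dim (insert u0 ?W) = dim S" by (metis dim_span)
  ultimately show ?thesis using \<open>even (dim ?W)\<close> by simp
qed

end

lemma Bn_gen_almost_pseudo_hermitianD:
  assumes "Bn_gen_almost_pseudo_hermitian Em G F"
  shows "gen_metric Em" and "is_Gend Em G" and "Bn_gen_almost_complex F"
    and "G (F x) = F (G x)"
  using assms unfolding Bn_gen_almost_pseudo_hermitian_def by (simp_all, metis o_apply)

lemma Gend_kernel_vector: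
  fixes Em :: "('n::finite) fib set" and G F :: "'n fib \<Rightarrow> 'n fib" and u0 :: "'n fib"
  assumes "Bn_gen_almost_pseudo_hermitian Em G F" and "F u0 = 0" and "u0 \<noteq> 0"
  shows "G u0 = (-1) ^ CARD('n) *\<^sub>R u0"
proof -
  note gm = Bn_gen_almost_pseudo_hermitianD(1)[OF assms(1)]
    and Gend = Bn_gen_almost_pseudo_hermitianD(2)[OF assms(1)]
    and F = Bn_gen_almost_pseudo_hermitianD(3)[OF assms(1)]
    and comm = Bn_gen_almost_pseudo_hermitianD(4)[OF assms(1)]
  have linG: "linear G" using Gend unfolding is_Gend_def by simp
  note linF = Bn_gen_almost_complexD(1)[OF F]
  have "F (G u0) = 0" using comm[of u0] assms(2) linG by (simp add: linear_0)
  then obtain c where c: "G u0 = c *\<^sub>R u0" using kernel_eq_multiple[OF F assms(2,3)] by blast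
  then have "u0 = (c * c) *\<^sub>R u0"
    using Gend_involutive[OF gm Gend, of u0] linG by (simp add: linear_scale)
  then have "(c * c - 1) *\<^sub>R u0 = 0" by (simp add: algebra_simps)
  then have "c * c = 1" using assms(3) by simp
  then consider "c = 1" | "c = -1" by (auto simp: square_eq_1_iff)
  then show ?thesis
  proof cases
    case 1
    then have "u0 \<in> Eplus Em" using c Gend_eq_self_iff[OF gm Gend] by simp
    moreover have "F x \<in> Eplus Em" if "x \<in> Eplus Em" for x
      using that comm[of x] Gend_eq_self_iff[OF gm Gend, of x] Gend_eq_self_iff[OF gm Gend, of "F x"]
      by simp
    ultimately have "odd (dim (Eplus Em))"
      by (intro odd_dim_invariant_subspace[OF F assms(2,3) subspace_Eplus])
    then show ?thesis using c 1 dim_Eplus[OF gm] by simp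
  next
    case 2
    then have "u0 \<in> Em" using c Gend_eq_neg_iff[OF gm Gend] by simp
    moreover have "F x \<in> Em" if "x \<in> Em" for x
      using that comm[of x] Gend_eq_neg_iff[OF gm Gend, of x] Gend_eq_neg_iff[OF gm Gend, of "F x"]
        linF by (simp add: linear_neg)
    ultimately have "odd (dim Em)"
      by (intro odd_dim_invariant_subspace[OF F assms(2,3) subspace_gen_metric[OF gm]])
    then show ?thesis using c 2 gm unfolding gen_metric_def by simp
  qed
qed

theorem lemma3p2:
  fixes Em :: "('n::finite) fib set" and G F :: "'n fib \<Rightarrow> 'n fib" and u0 :: "'n fib"
  assumes "Bn_gen_almost_pseudo_hermitian Em G F"
    and "u0 \<in> {x. F x = 0}"
    and "sp u0 u0 = (-1) ^ CARD('n)"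
  shows "G u0 = (-1) ^ CARD('n) *\<^sub>R u0
         \<and> (\<forall>u v. Gform G (F u) (F v) = Gform G u v - sp u u0 * sp v u0)
         \<and> (\<forall>u v. Gform G (F u) v = - Gform G u (F v))"
proof -
  note gm = Bn_gen_almost_pseudo_hermitianD(1)[OF assms(1)]
    and Gend = Bn_gen_almost_pseudo_hermitianD(2)[OF assms(1)]
    and F = Bn_gen_almost_pseudo_hermitianD(3)[OF assms(1)]
    and comm = Bn_gen_almost_pseudo_hermitianD(4)[OF assms(1)]
  have Fu0: "F u0 = 0" using assms(2) by simp
  have u0: "u0 \<noteq> 0" using assms(3) by (auto simp: sp_simps)
  have Gu0: "G u0 = (-1) ^ CARD('n) *\<^sub>R u0" by (rule Gend_kernel_vector[OF assms(1) Fu0 u0])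
  moreover have "Gform G (F u) (F v) = Gform G u v - sp u u0 * sp v u0" for u v
  proof -
    have "Gform G (F u) (F v) = sp (F (G u)) (F v)" unfolding Gform_def using comm by simp
    also have "\<dots> = sp (G u) v - sp (G u) u0 * sp v u0 / sp u0 u0" by (rule sp_F_F[OF F Fu0 u0])
    also have "sp (G u) u0 = (-1) ^ CARD('n) * sp u u0"
      using Gend_self_adjoint[OF gm Gend] Gu0 by (simp add: sp_simps)
    finally show ?thesis using assms(3) unfolding Gform_def by simp
  qed
  moreover have "Gform G (F u) v = - Gform G u (F v)" for u v
    unfolding Gform_def using comm sp_F_skew[OF F Fu0 u0] by simp
  ultimately show ?thesis by blast
qed

end
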